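(* Let $\lambda$ be an uncountable strong limit cardinal of countable cofinality, let $\dot U$ be a unary predicate symbol, let $\varphi(v_1,\dots,v_n)$ be an $\mathcal{L}_{\in}(\dot U)$-formula and let $\alpha_1,\dots,\alpha_n<\lambda$. Then the set $\{(z_1,z_2)\in\mathsf{BC}_\lambda\times{}^{\lambda}2: (\lambda,\in_{z_1},U_{z_2})\models\varphi(\alpha_1,\dots,\alpha_n)\}$ is $\lambda$-Borel in $\mathsf{BC}_\lambda\times{}^{\lambda}2$.
   Context: Fix a bijective ordinal pairing function $\langle\cdot,\cdot\rangle:\lambda\times\lambda\to\lambda$. For $z\in{}^{\lambda}2$, $E_z$ (also written $\in_z$) is the binary relation on $\lambda$ with $\alpha\,E_z\,\beta$ iff $z(\langle\alpha,\beta\rangle)=0$, and $U_z=\{\alpha<\lambda: z(\alpha)=1\}$. If $(\lambda,E_z)$ is extensional and well-founded, $\pi_z$ is its transitive collapse. $\mathsf{BC}_\lambda$ is the set of $z$ such that $(\lambda,E_z)$ is extensional and well-founded and for each $b\in H_\lambda$, if $\pi_z^{-1}(b)$ exists then its set of $E_z$-predecessors is bounded in $\lambda$. ${}^{\lambda}2$ has the bounded topology (basic open sets $N_s=\{x:s\subseteq x\}$, $s\in{}^{\alpha}2$, $\alpha<\lambda$); a set is $\lambda$-Borel in a space if it belongs to the smallest $\lambda^+$-algebra containing the open sets of that space (here the subspace topology on $\mathsf{BC}_\lambda\times{}^{\lambda}2$). *)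

theory Defs
  imports Main "HOL-Library.Countable_Set"
begin

text \<open>The cardinal lambda is represented by a type 'a together with a cardinal
  well-order r on UNIV (so the elements of lambda are exactly the elements of 'a,
  ordered by r). Elements of the space of functions lambda to 2 are z :: 'a \<Rightarrow> bool,
  with True read as 1 and False as 0.\<close>

definition strong_limit_card :: "'a rel \<Rightarrow> bool" where
  "strong_limit_card r \<longleftrightarrow>
     (\<forall>A :: 'a set. ordLess2 (card_of A) r \<longrightarrow> ordLess2 (card_of (Pow A)) r)"

definition countable_cofinality :: "'a rel \<Rightarrow> bool" where
  "countable_cofinality r \<longleftrightarrow> (\<exists>C. countable C \<and> (\<forall>a. \<exists>c\<in>C. (a, c) \<in> r))"

definition ord_less :: "'a rel \<Rightarrow> 'a \<Rightarrow> 'a \<Rightarrow> bool" where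
  "ord_less r b a \<longleftrightarrow> (b, a) \<in> r \<and> b \<noteq> a"

definition Erel :: "('a \<times> 'a \<Rightarrow> 'a) \<Rightarrow> ('a \<Rightarrow> bool) \<Rightarrow> 'a rel" where
  "Erel pr z = {(a, b). \<not> z (pr (a, b))}"

definition Uset :: "('a \<Rightarrow> bool) \<Rightarrow> 'a set" where
  "Uset z = {a. z a}"

definition extensional_rel :: "'a rel \<Rightarrow> bool" where
  "extensional_rel E \<longleftrightarrow> (\<forall>a b. (\<forall>c. (c, a) \<in> E \<longleftrightarrow> (c, b) \<in> E) \<longrightarrow> a = b)"

text \<open>For a node x of the extensional well-founded (lambda, E_z), its
  collapse pi_z(x) lies in H_lambda iff its transitive closure has size < lambda; the
  transitive closure of pi_z(x) is the (injective) collapse image of the set of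
  E_z^+-predecessors of x. So the condition "for each b in H_lambda, if pi_z^{-1}(b)
  exists then its set of E_z-predecessors is bounded" reads as follows.\<close>
definition BC :: "'a rel \<Rightarrow> ('a \<times> 'a \<Rightarrow> 'a) \<Rightarrow> ('a \<Rightarrow> bool) set" where
  "BC r pr = {z. extensional_rel (Erel pr z) \<and> wf (Erel pr z) \<and>
     (\<forall>x. ordLess2 (card_of {y. (y, x) \<in> (Erel pr z)\<^sup>+}) r \<longrightarrow>
          (\<exists>g. \<forall>y. (y, x) \<in> Erel pr z \<longrightarrow> ord_less r y g))}"

definition Nbasic :: "'a rel \<Rightarrow> 'a \<Rightarrow> ('a \<Rightarrow> bool) \<Rightarrow> ('a \<Rightarrow> bool) set" where
  "Nbasic r \<alpha> s = {x. \<forall>b. ord_less r b \<alpha> \<longrightarrow> x b = s b}"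

definition prod_open :: "'a rel \<Rightarrow> (('a \<Rightarrow> bool) \<times> ('a \<Rightarrow> bool)) set \<Rightarrow> bool" where
  "prod_open r W \<longleftrightarrow> (\<forall>p\<in>W. \<exists>\<alpha> s \<beta> t.
      p \<in> Nbasic r \<alpha> s \<times> Nbasic r \<beta> t \<and> Nbasic r \<alpha> s \<times> Nbasic r \<beta> t \<subseteq> W)"

inductive_set lam_Borel :: "'a rel \<Rightarrow> (('a \<Rightarrow> bool) \<times> ('a \<Rightarrow> bool)) set
    \<Rightarrow> (('a \<Rightarrow> bool) \<times> ('a \<Rightarrow> bool)) set set"
  for r X where
  rel_open: "prod_open r W \<Longrightarrow> W \<inter> X \<in> lam_Borel r X"
| compl: "A \<in> lam_Borel r X \<Longrightarrow> X - A \<in> lam_Borel r X"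
| union: "(\<And>A. A \<in> F \<Longrightarrow> A \<in> lam_Borel r X) \<Longrightarrow> ordLeq2 (card_of F) r \<Longrightarrow> \<Union>F \<in> lam_Borel r X"

datatype fm = Mem nat nat | Eq nat nat | Upred nat | Neg fm | Conj fm fm | Ex nat fm

fun sat :: "'a rel \<Rightarrow> 'a set \<Rightarrow> (nat \<Rightarrow> 'a) \<Rightarrow> fm \<Rightarrow> bool" where
  "sat E U v (Mem i j) \<longleftrightarrow> (v i, v j) \<in> E"
| "sat E U v (Eq i j) \<longleftrightarrow> v i = v j"
| "sat E U v (Upred i) \<longleftrightarrow> v i \<in> U"
| "sat E U v (Neg \<phi>) \<longleftrightarrow> \<not> sat E U v \<phi>"
| "sat E U v (Conj \<phi> \<psi>) \<longleftrightarrow> sat E U v \<phi> \<and> sat E U v \<psi>"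
| "sat E U v (Ex i \<phi>) \<longleftrightarrow> (\<exists>a. sat E U (v(i := a)) \<phi>)"

end

theory Submission
  imports Defs
begin

text \<open>Every set defined by a first-order formula is obtained from the sets
  \<open>{(z1, z2). z1 \<langle>a, b\<rangle> = 0}\<close> and \<open>{(z1, z2). z2 a = 1}\<close>, which are relatively open
  since they depend on a single coordinate below \<lambda>, by complements, finite unions
  (for the connectives) and unions of \<lambda> many sets (for a quantifier, whose witnesses
  range over \<lambda>).\<close>

unbundle cardinal_syntax

lemma card_of_finite_ordLeq_infinite_Card_order:
  assumes "Card_order r" "infinite (Field r)" "finite A"
  shows "|A| \<le>o r"
proof -
  have "|A| <o r"
    using finite_ordLess_infinite[OF card_of_Well_order card_order_on_well_order_on[OF assms(1)]]
      assms(2,3) by (simp add: Field_card_of)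
  then show ?thesis
    by (rule ordLess_imp_ordLeq)
qed

lemma card_of_range_ordLeq_Card_order:
  fixes f :: "'a \<Rightarrow> 'b" and r :: "'a rel"
  assumes "Card_order r" "Field r = UNIV"
  shows "|range f| \<le>o r"
  using card_of_image[of f UNIV] card_of_Field_ordIso[OF assms(1)] assms(2)
    ordLeq_ordIso_trans by fastforce

lemma ex_ord_less_infinite_Card_order:
  assumes "Card_order r" "Field r = UNIV" "infinite (UNIV :: 'a set)"
  shows "\<exists>d. ord_less r (c :: 'a) d"
  using infinite_Card_order_limit[of r c] assms by (auto simp: ord_less_def)

lemma prod_open_UNIV: "prod_open r UNIV"
  unfolding prod_open_def by (auto simp: Nbasic_def)

lemma prod_open_coord:
  assumes "ord_less r c d"
  shows "prod_open r {p. Q (fst p c) (snd p c)}"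
  unfolding prod_open_def
proof
  fix p assume "p \<in> {p. Q (fst p c) (snd p c)}"
  then have "Nbasic r d (fst p) \<times> Nbasic r d (snd p) \<subseteq> {p. Q (fst p c) (snd p c)}"
    using assms by (auto simp: Nbasic_def)
  moreover have "p \<in> Nbasic r d (fst p) \<times> Nbasic r d (snd p)"
    by (simp add: Nbasic_def mem_Times_iff)
  ultimately show "\<exists>\<alpha> s \<beta> t. p \<in> Nbasic r \<alpha> s \<times> Nbasic r \<beta> t \<and>
      Nbasic r \<alpha> s \<times> Nbasic r \<beta> t \<subseteq> {p. Q (fst p c) (snd p c)}"
    by blast
qed

lemma lam_Borel_space: "X \<in> lam_Borel r X"
  using lam_Borel.rel_open[OF prod_open_UNIV] by simp

lemma lam_Borel_empty: "{} \<in> lam_Borel r X"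
  using lam_Borel.compl[OF lam_Borel_space] by simp

lemma lam_Borel_Int:
  assumes "Card_order r" "infinite (Field r)"
    and A: "A \<in> lam_Borel r X" and B: "B \<in> lam_Borel r X" and "A \<subseteq> X"
  shows "A \<inter> B \<in> lam_Borel r X"
proof -
  have "|{X - A, X - B}| \<le>o r"
    by (rule card_of_finite_ordLeq_infinite_Card_order[OF assms(1,2)]) simp
  then have "\<Union>{X - A, X - B} \<in> lam_Borel r X"
    by (rule lam_Borel.union[rotated]) (use lam_Borel.compl[OF A] lam_Borel.compl[OF B] in blast)
  then have "X - \<Union>{X - A, X - B} \<in> lam_Borel r X"
    by (rule lam_Borel.compl)
  moreover have "X - \<Union>{X - A, X - B} = A \<inter> B"
    using \<open>A \<subseteq> X\<close> by blast
  ultimately show ?thesis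
    by simp
qed

lemma lam_Borel_UN:
  fixes r :: "'a rel" and A :: "'a \<Rightarrow> _"
  assumes "Card_order r" "Field r = UNIV" "\<And>a. A a \<in> lam_Borel r X"
  shows "(\<Union>a. A a) \<in> lam_Borel r X"
  by (rule lam_Borel.union[OF _ card_of_range_ordLeq_Card_order[OF assms(1,2)]])
    (use assms(3) in blast)

lemma lam_Borel_definable:
  fixes r :: "'a rel"
  assumes r: "Card_order r" "Field r = UNIV" and inf: "infinite (UNIV :: 'a set)"
  shows "{p \<in> X. sat (Erel pr (fst p)) (Uset (snd p)) v \<phi>} \<in> lam_Borel r X"
proof (induction \<phi> arbitrary: v)
  case (Mem i j)
  obtain d where "ord_less r (pr (v i, v j)) d"
    using ex_ord_less_infinite_Card_order[OF r inf] by blast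
  from lam_Borel.rel_open[OF prod_open_coord[OF this, of "\<lambda>x y. \<not> x"]]
  show ?case
    by (simp add: Erel_def Int_def conj_commute)
next
  case (Upred i)
  obtain d where "ord_less r (v i) d"
    using ex_ord_less_infinite_Card_order[OF r inf] by blast
  from lam_Borel.rel_open[OF prod_open_coord[OF this, of "\<lambda>x y. y"]]
  show ?case
    by (simp add: Uset_def Int_def conj_commute)
next
  case (Eq i j)
  show ?case
    by (cases "v i = v j") (simp_all add: lam_Borel_space lam_Borel_empty)
next
  case (Neg \<phi>)
  have "{p \<in> X. sat (Erel pr (fst p)) (Uset (snd p)) v (Neg \<phi>)}
      = X - {p \<in> X. sat (Erel pr (fst p)) (Uset (snd p)) v \<phi>}"
    by auto
  with lam_Borel.compl[OF Neg.IH] show ?case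
    by simp
next
  case (Conj \<phi> \<psi>)
  have "{p \<in> X. sat (Erel pr (fst p)) (Uset (snd p)) v (Conj \<phi> \<psi>)}
      = {p \<in> X. sat (Erel pr (fst p)) (Uset (snd p)) v \<phi>}
        \<inter> {p \<in> X. sat (Erel pr (fst p)) (Uset (snd p)) v \<psi>}"
    by auto
  moreover have "{p \<in> X. sat (Erel pr (fst p)) (Uset (snd p)) v \<phi>}
      \<inter> {p \<in> X. sat (Erel pr (fst p)) (Uset (snd p)) v \<psi>} \<in> lam_Borel r X"
    by (rule lam_Borel_Int[OF r(1) _ Conj.IH]) (use r(2) inf in auto)
  ultimately show ?case
    by simp
next
  case (Ex i \<phi>)
  have "{p \<in> X. sat (Erel pr (fst p)) (Uset (snd p)) v (Ex i \<phi>)}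
      = (\<Union>a. {p \<in> X. sat (Erel pr (fst p)) (Uset (snd p)) (v(i := a)) \<phi>})"
    by auto
  with lam_Borel_UN[OF r Ex.IH] show ?case
    by simp
qed

theorem lemma3:
  fixes r :: "'a rel" and pr :: "'a \<times> 'a \<Rightarrow> 'a" and \<phi> :: fm and v :: "nat \<Rightarrow> 'a"
  assumes "Card_order r" and "Field r = UNIV"
    and "\<not> countable (UNIV :: 'a set)"
    and "strong_limit_card r"
    and "countable_cofinality r"
    and "bij pr"
  shows "{(z1, z2). z1 \<in> BC r pr \<and> sat (Erel pr z1) (Uset z2) v \<phi>}
           \<in> lam_Borel r (BC r pr \<times> UNIV)"
proof -
  have "infinite (UNIV :: 'a set)"
    using assms(3) countable_finite by blast
  moreover have "{(z1, z2). z1 \<in> BC r pr \<and> sat (Erel pr z1) (Uset z2) v \<phi>}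
      = {p \<in> BC r pr \<times> UNIV. sat (Erel pr (fst p)) (Uset (snd p)) v \<phi>}"
    by auto
  ultimately show ?thesis
    using lam_Borel_definable[OF assms(1,2)] by simp
qed

end
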